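(* As $n\to\infty$, $$\log(n)\sum_{(a,b)\in\mathcal{A}_n}|r_n(a,b)|\longrightarrow 0.$$
   Context: $\mathcal{A}_n=\{(a,b)\in\mathbb{N}^2: a\ge b\ge1,\ a+b\le n+1\}$, $x^{\underline{2}}=x(x-1)$, and $r_n(a,b)=\dfrac{(-1)^{n+a-b}(n+1)(2a-2b+1)(a-1)!(2b-2)!(n-a-b+2)!}{2^{n-a+b-1}\,n!\,(b-1)!\,(n+a-b+2)^{\underline{2}}\,(n-a+b+1)^{\underline{2}}}$. *)

theory Defs
  imports "HOL-Analysis.Analysis"
begin

definition A_set :: "nat \<Rightarrow> (nat \<times> nat) set" where
  "A_set n = {(a, b). a \<ge> b \<and> b \<ge> 1 \<and> a + b \<le> n + 1}"

definition falling2 :: "real \<Rightarrow> real" where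
  "falling2 x = x * (x - 1)"

definition r_coef :: "nat \<Rightarrow> nat \<Rightarrow> nat \<Rightarrow> real" where
  "r_coef n a b =
     ((-1) powi (int n + int a - int b)) * (real n + 1) * (2 * real a - 2 * real b + 1)
       * fact (a - 1) * fact (2 * b - 2) * fact (n + 2 - a - b)
     / (2 powi (int n - int a + int b - 1) * fact n * fact (b - 1)
        * falling2 (real n + real a - real b + 2) * falling2 (real n - real a + real b + 1))"

end

theory Submission
  imports Defs
begin

text \<open>
  We show \<open>log n \<cdot> \<Sum>_{(a,b)\<in>A_n} |r_n(a,b)| \<longrightarrow> 0\<close> by proving the explicit bound
  \<open>\<Sum>_{(a,b)\<in>A_n} |r_n(a,b)| \<le> 3/n\<close> for \<open>n \<ge> 2\<close>; the theorem then follows from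
  \<open>log n / n \<longrightarrow> 0\<close> by a sandwich argument.

  The bound comes from a single term estimate
  \<open>|r_n(a,b)| \<le> 2^-(n+2-a-b) \<cdot> (a-1)! (b-1)! (n+2-a-b)! / n!\<close>,
  obtained from \<open>(2b-2)! \<le> 4^(b-1) ((b-1)!)^2\<close> and a bound \<open>1/2\<close> on the remaining rational factor.
  The factorial quotient equals \<open>1\<close> at the corner \<open>(1,1)\<close>, is at most \<open>1/n\<close> elsewhere in the
  row \<open>b = 1\<close> and at most \<open>1/(n(n-1))\<close> for \<open>b \<ge> 2\<close>, while the powers of two along each row
  sum to at most \<open>1\<close>. Summing row by row gives \<open>2/n\<close> for the first row and
  \<open>(n-1) \<cdot> 1/(n(n-1)) = 1/n\<close> for all the others.
\<close>

text \<open>The central binomial coefficient is at most \<open>4^m\<close>, hence \<open>(2m)! \<le> 4^m (m!)^2\<close>.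
  This absorbs the factor \<open>(2b-2)!\<close> of \<open>r_n(a,b)\<close> against the power of two in its denominator.\<close>

lemma fact_double_le_four_pow:
  "(fact (2 * m) :: 'a :: linordered_semidom) \<le> 4 ^ m * fact m * fact m"
proof -
  have "fact (2 * m) = fact m * fact m * (2 * m choose m)"
    using binomial_fact_lemma[of m "2 * m"] by simp
  also have "\<dots> \<le> fact m * fact m * 4 ^ m"
    using binomial_le_pow2[of "2 * m" m] by (simp add: power_mult)
  finally have "fact (2 * m) \<le> 4 ^ m * fact m * (fact m :: nat)"
    by (simp add: mult.commute)
  then have "of_nat (fact (2 * m)) \<le> (of_nat (4 ^ m * fact m * fact m) :: 'a)"
    by (simp only: of_nat_le_iff)
  then show ?thesis
    by simp
qed

text \<open>Merging two positive factorials: \<open>x! y! \<le> (x+y-1)!\<close> for \<open>x, y \<ge> 1\<close>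
  (the quotient is a product of factors \<open>(x+j)/(j+1) \<ge> 1\<close>).\<close>

lemma fact_mult_le_fact_pred:
  assumes "1 \<le> x" "1 \<le> y"
  shows "(fact x * fact y :: 'a :: linordered_semidom) \<le> fact (x + y - 1)"
proof -
  have "fact x * fact (Suc z) \<le> (fact (x + z) :: nat)" for z
  proof (induction z)
    case 0 then show ?case by simp
  next
    case (Suc z)
    have "fact x * fact (Suc (Suc z)) = fact x * fact (Suc z) * (z + 2)"
      by (simp add: algebra_simps)
    also have "\<dots> \<le> fact (x + z) * (x + z + 1)"
      using Suc assms(1) by (intro mult_mono) auto
    also have "\<dots> = fact (x + Suc z)"
      by (simp add: algebra_simps)
    finally show ?case .
  qed
  from this[of "y - 1"] assms have "fact x * fact y \<le> (fact (x + y - 1) :: nat)"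
    by simp
  then have "of_nat (fact x * fact y) \<le> (of_nat (fact (x + y - 1)) :: 'a)"
    by (simp only: of_nat_le_iff)
  then show ?thesis
    by simp
qed

lemma sum_reflected_geometric_le:
  fixes q :: real
  assumes "0 \<le> q" "q < 1" "S \<subseteq> {..N}"
  shows "(\<Sum>a\<in>S. q ^ (N - a)) \<le> 1 / (1 - q)"
proof -
  have "inj_on (\<lambda>a. N - a) S"
  proof (rule inj_onI)
    fix x y assume "x \<in> S" "y \<in> S" "N - x = N - y"
    moreover from \<open>x \<in> S\<close> \<open>y \<in> S\<close> have "x \<le> N" "y \<le> N"
      using assms(3) by auto
    ultimately show "x = y"
      by arith
  qed
  then have "(\<Sum>a\<in>S. q ^ (N - a)) = (\<Sum>j\<in>(\<lambda>a. N - a) ` S. q ^ j)"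
    by (simp add: sum.reindex)
  also have "\<dots> \<le> (\<Sum>j. q ^ j)"
    using assms finite_subset[OF assms(3)]
    by (intro sum_le_suminf summable_geometric) auto
  also have "\<dots> = 1 / (1 - q)"
    using assms by (intro suminf_geometric) auto
  finally show ?thesis .
qed

text \<open>The factorial part of \<open>r_n(a,b)\<close> after the estimate of \<open>(2b-2)!\<close>:
  \<open>w_n(a,b) = (a-1)! (b-1)! (n+2-a-b)! / n!\<close>, a reciprocal multinomial coefficient
  (the three arguments add up to \<open>n\<close>).\<close>

definition fact_weight :: "nat \<Rightarrow> nat \<Rightarrow> nat \<Rightarrow> real" where
  "fact_weight n a b = fact (a - 1) * fact (b - 1) * fact (n + 2 - a - b) / fact n"

text \<open>The coefficient in the coordinates \<open>b = m+1\<close>, \<open>a = b+d\<close>, \<open>n+1 = a+b+k\<close>, in which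
  every exponent and factorial argument of the definition is a plain natural number.\<close>

lemma abs_r_coef_param:
  assumes n: "n = 2 * m + d + k + 1"
  shows "\<bar>r_coef n (m + d + 1) (m + 1)\<bar> =
           (real n + 1) * (2 * real d + 1)
             / ((real n + real d + 2) * (real n + real d + 1) * ((2 * real m + real k + 2) * (2 * real m + real k + 1)))
           * (fact (m + d) * fact (2 * m) * fact (k + 1) / (2 ^ (2 * m + k) * fact n * fact m))"
proof -
  have sign: "int n + int (m + d + 1) - int (m + 1) = int (n + d)"
    and two_pow: "int n - int (m + d + 1) + int (m + 1) - 1 = int (2 * m + k)"
    and idx: "m + d + 1 - 1 = m + d" "m + 1 - 1 = m" "2 * (m + 1) - 2 = 2 * m" "n + 2 - (m + d + 1) - (m + 1) = k + 1"
    using n by auto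
  have lin: "2 * real (m + d + 1) - 2 * real (m + 1) + 1 = 2 * real d + 1"
    by simp
  have fall: "falling2 (real n + real (m + d + 1) - real (m + 1) + 2) = (real n + real d + 2) * (real n + real d + 1)"
    "falling2 (real n - real (m + d + 1) + real (m + 1) + 1) = (2 * real m + real k + 2) * (2 * real m + real k + 1)"
    using n by (simp_all add: falling2_def algebra_simps)
  show ?thesis
    unfolding r_coef_def sign two_pow idx lin fall power_int_of_nat
    by (simp add: abs_mult) (simp only: mult_ac)
qed

text \<open>The rational prefactor in these coordinates is at most \<open>1/2\<close>: its numerator is at most the
  first factor pair of the denominator (as \<open>d \<le> n\<close>), and the second pair is at least \<open>2\<close>.\<close>

lemma r_coef_prefactor_le:
  assumes n: "n = 2 * m + d + k + 1"
  shows "(real n + 1) * (2 * real d + 1)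
           / ((real n + real d + 2) * (real n + real d + 1) * ((2 * real m + real k + 2) * (2 * real m + real k + 1)))
         \<le> 1 / 2"
proof -
  define X where "X = (real n + real d + 2) * (real n + real d + 1)"
  define Y where "Y = (2 * real m + real k + 2) * (2 * real m + real k + 1)"
  have N_le: "(real n + 1) * (2 * real d + 1) \<le> X"
    unfolding X_def using n by (intro mult_mono) auto
  have Y_ge: "2 * 1 \<le> Y"
    unfolding Y_def by (intro mult_mono) auto
  have X_pos: "X > 0"
    unfolding X_def by simp
  have "(real n + 1) * (2 * real d + 1) / (X * Y) \<le> X / (X * Y)"
    using N_le X_pos Y_ge by (intro divide_right_mono) auto
  also have "\<dots> = 1 / Y"
    using X_pos by simp
  also have "\<dots> \<le> 1 / 2"
    using Y_ge by (intro divide_left_mono) auto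
  finally show ?thesis
    unfolding X_def Y_def .
qed

text \<open>Key term estimate: \<open>|r_n(a,b)| \<le> 2^-(n+2-a-b) w_n(a,b)\<close>. Besides the prefactor bound,
  \<open>(2m)! \<le> 4^m (m!)^2\<close> cancels all but \<open>2^-k\<close> of the power of two.\<close>

lemma abs_r_coef_le:
  assumes "(a, b) \<in> A_set n"
  shows "\<bar>r_coef n a b\<bar> \<le> (1 / 2) ^ (n + 2 - a - b) * fact_weight n a b"
proof -
  obtain m d k where b: "b = m + 1" and a: "a = m + d + 1" and n: "n = 2 * m + d + k + 1"
  proof
    show "b = (b - 1) + 1" "a = (b - 1) + (a - b) + 1" "n = 2 * (b - 1) + (a - b) + (n + 1 - a - b) + 1"
      using assms by (auto simp: A_set_def)
  qed
  define P where "P = (real n + 1) * (2 * real d + 1)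
    / ((real n + real d + 2) * (real n + real d + 1) * ((2 * real m + real k + 2) * (2 * real m + real k + 1)))"
  have P_le: "P \<le> 1 / 2"
    unfolding P_def by (rule r_coef_prefactor_le[OF n])
  have P_nonneg: "P \<ge> 0"
    unfolding P_def by simp
  have rescale: "1 / 2 * (A * (4 ^ m * M * M) * K / (2 ^ (2 * m + k) * N * M)) = (1 / 2) ^ (k + 1) * (A * M * K / N)"
    if "M > 0" "N > 0" for A M K N :: real
  proof -
    have "(4 :: real) ^ m = 2 ^ m * 2 ^ m" "(2 :: real) ^ (2 * m + k) = 2 ^ m * 2 ^ m * 2 ^ k"
      by (simp_all add: power_mult_distrib[symmetric] power_add mult_2)
    then show ?thesis
      using that by (simp add: field_simps power_add)
  qed
  have "\<bar>r_coef n a b\<bar> = P * (fact (m + d) * fact (2 * m) * fact (k + 1) / (2 ^ (2 * m + k) * fact n * fact m))"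
    unfolding a b P_def by (rule abs_r_coef_param[OF n])
  also have "\<dots> \<le> 1 / 2 * (fact (m + d) * (4 ^ m * fact m * fact m) * fact (k + 1) / (2 ^ (2 * m + k) * fact n * fact m))"
    using P_le P_nonneg by (intro mult_mono divide_right_mono mult_right_mono mult_left_mono fact_double_le_four_pow) auto
  also have "\<dots> = (1 / 2) ^ (k + 1) * (fact (m + d) * fact m * fact (k + 1) / fact n)"
    by (rule rescale) simp_all
  also have "\<dots> = (1 / 2) ^ (n + 2 - a - b) * fact_weight n a b"
  proof -
    have "a - 1 = m + d" "b - 1 = m" "n + 2 - a - b = k + 1"
      using a b n by simp_all
    then show ?thesis
      unfolding fact_weight_def by simp
  qed
  finally show ?thesis .
qed

lemma fact_weight_first_row:
  assumes "2 \<le> a" "a \<le> n"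
  shows "fact_weight n a 1 \<le> 1 / real n"
proof -
  have "fact_weight n a 1 = fact (a - 1) * fact (n + 1 - a) / (real n * fact (n - 1))"
  proof -
    have "n + 2 - a - 1 = n + 1 - a" "fact n = real n * fact (n - 1)"
      using assms fact_reduce[of n] by auto
    then show ?thesis
      unfolding fact_weight_def by simp
  qed
  also have "\<dots> \<le> fact (n - 1) / (real n * fact (n - 1))"
  proof (intro divide_right_mono)
    have a1: "1 \<le> a - 1" and c1: "1 \<le> n + 1 - a" and sum: "a - 1 + (n + 1 - a) - 1 = n - 1"
      using assms by auto
    show "fact (a - 1) * fact (n + 1 - a) \<le> (fact (n - 1) :: real)"
      using fact_mult_le_fact_pred[OF a1 c1] unfolding sum .
  qed simp
  also have "\<dots> = 1 / real n"
    by simp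
  finally show ?thesis .
qed

lemma fact_weight_inner:
  assumes "2 \<le> b" "(a, b) \<in> A_set n"
  shows "fact_weight n a b \<le> 1 / (real n * (real n - 1))"
proof -
  have ab: "b \<le> a" "a + b \<le> n + 1"
    using assms(2) by (auto simp: A_set_def)
  obtain q where q: "n = q + 2"
    using assms ab le_Suc_ex[of 2 n] by (auto simp: add.commute)
  have fact_n: "(fact n :: real) = real n * (real n - 1) * fact (n - 2)"
    unfolding q by (simp add: algebra_simps)
  have b1: "1 \<le> b - 1" and c1: "1 \<le> n + 2 - a - b" and sum1: "b - 1 + (n + 2 - a - b) - 1 = n - a"
    using assms ab by auto
  have "fact (b - 1) * fact (n + 2 - a - b) \<le> (fact (n - a) :: real)"
    using fact_mult_le_fact_pred[OF b1 c1] unfolding sum1 .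
  then have "fact (a - 1) * fact (b - 1) * fact (n + 2 - a - b) \<le> fact (a - 1) * (fact (n - a) :: real)"
    by (simp add: mult.assoc mult_left_mono)
  also have "\<dots> \<le> fact (n - 2)"
  proof -
    have a1: "1 \<le> a - 1" and c1: "1 \<le> n - a" and sum2: "a - 1 + (n - a) - 1 = n - 2"
      using assms ab by auto
    show ?thesis
      using fact_mult_le_fact_pred[OF a1 c1] unfolding sum2 .
  qed
  finally have "fact_weight n a b \<le> fact (n - 2) / (real n * (real n - 1) * fact (n - 2))"
    unfolding fact_weight_def fact_n using assms ab by (intro divide_right_mono) simp_all
  also have "\<dots> = 1 / (real n * (real n - 1))"
    by simp
  finally show ?thesis .
qed

lemma sum_half_power_le_one:
  assumes "S \<subseteq> {..N}"
  shows "(\<Sum>a\<in>S. (1 / 2 :: real) ^ (N + 1 - a)) \<le> 1"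
proof -
  have "(\<Sum>a\<in>S. (1 / 2 :: real) ^ (N + 1 - a)) = 1 / 2 * (\<Sum>a\<in>S. (1 / 2) ^ (N - a))"
    unfolding sum_distrib_left using assms by (intro sum.cong) (auto simp: Suc_diff_le)
  also have "\<dots> \<le> 1 / 2 * (1 / (1 - 1 / 2))"
    using sum_reflected_geometric_le[OF _ _ assms, of "1 / 2"] by simp
  finally show ?thesis by simp
qed

text \<open>Row \<open>b = 1\<close>: the corner term is at most \<open>2^-n \<le> 1/n\<close>, the others sum to at most \<open>1/n\<close>.\<close>

lemma first_row_le:
  assumes "2 \<le> n"
  shows "(\<Sum>a\<in>{1..n}. \<bar>r_coef n a 1\<bar>) \<le> 2 / real n"
proof -
  have corner: "\<bar>r_coef n 1 1\<bar> \<le> 1 / real n"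
  proof -
    have "\<bar>r_coef n 1 1\<bar> \<le> (1 / 2) ^ n"
      using abs_r_coef_le[of 1 1 n] assms by (simp add: A_set_def fact_weight_def)
    also have "\<dots> \<le> 1 / real n"
      using assms less_exp[of n] by (simp add: power_divide divide_simps)
    finally show ?thesis .
  qed
  have "(\<Sum>a\<in>{2..n}. \<bar>r_coef n a 1\<bar>) \<le> (\<Sum>a\<in>{2..n}. (1 / 2) ^ (n + 1 - a) * (1 / real n))"
  proof (rule sum_mono)
    fix a assume a: "a \<in> {2..n}"
    then have "\<bar>r_coef n a 1\<bar> \<le> (1 / 2) ^ (n + 2 - a - 1) * fact_weight n a 1"
      by (intro abs_r_coef_le) (auto simp: A_set_def)
    also have "\<dots> \<le> (1 / 2) ^ (n + 2 - a - 1) * (1 / real n)"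
      using a fact_weight_first_row[of a n] by (intro mult_left_mono) auto
    also have "n + 2 - a - 1 = n + 1 - a"
      by simp
    finally show "\<bar>r_coef n a 1\<bar> \<le> (1 / 2) ^ (n + 1 - a) * (1 / real n)" .
  qed
  also have "\<dots> = (\<Sum>a\<in>{2..n}. (1 / 2) ^ (n + 1 - a)) * (1 / real n)"
    by (rule sum_distrib_right[symmetric])
  also have "\<dots> \<le> 1 * (1 / real n)"
    by (intro mult_right_mono sum_half_power_le_one) auto
  finally have "(\<Sum>a\<in>{2..n}. \<bar>r_coef n a 1\<bar>) \<le> 1 / real n"
    by simp
  moreover have "{1..n} = insert 1 {2..n}"
    using assms by auto
  ultimately show ?thesis
    using corner by simp
qed

lemma inner_row_le:
  assumes "2 \<le> b"
  shows "(\<Sum>a\<in>{b..n+1-b}. \<bar>r_coef n a b\<bar>) \<le> 1 / (real n * (real n - 1))"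
proof -
  have "(\<Sum>a\<in>{b..n+1-b}. \<bar>r_coef n a b\<bar>)
          \<le> (\<Sum>a\<in>{b..n+1-b}. (1 / 2) ^ ((n + 1 - b) + 1 - a) * (1 / (real n * (real n - 1))))"
  proof (rule sum_mono)
    fix a assume a: "a \<in> {b..n+1-b}"
    then have A: "(a, b) \<in> A_set n"
      using assms by (auto simp: A_set_def)
    have "\<bar>r_coef n a b\<bar> \<le> (1 / 2) ^ (n + 2 - a - b) * fact_weight n a b"
      using abs_r_coef_le[OF A] .
    also have "\<dots> \<le> (1 / 2) ^ (n + 2 - a - b) * (1 / (real n * (real n - 1)))"
      using fact_weight_inner[OF assms A] by (intro mult_left_mono) auto
    also have "n + 2 - a - b = (n + 1 - b) + 1 - a"
      using a by auto
    finally show "\<bar>r_coef n a b\<bar> \<le> (1 / 2) ^ ((n + 1 - b) + 1 - a) * (1 / (real n * (real n - 1)))" .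
  qed
  also have "\<dots> = (\<Sum>a\<in>{b..n+1-b}. (1 / 2) ^ ((n + 1 - b) + 1 - a)) * (1 / (real n * (real n - 1)))"
    by (rule sum_distrib_right[symmetric])
  also have "\<dots> \<le> 1 * (1 / (real n * (real n - 1)))"
  proof (intro mult_right_mono sum_half_power_le_one)
    show "0 \<le> 1 / (real n * (real n - 1))"
      by (cases n) auto
  qed auto
  finally show ?thesis
    by simp
qed

text \<open>Summing over \<open>A_n\<close> row by row: \<open>b\<close> ranges over \<open>1..n\<close> and \<open>a\<close> over \<open>b..n+1-b\<close>
  (rows with \<open>2b > n+1\<close> are empty).\<close>

lemma sum_A_set_by_rows:
  "(\<Sum>(a, b)\<in>A_set n. f a b) = (\<Sum>b\<in>{1..n}. \<Sum>a\<in>{b..n+1-b}. f a b)"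
proof -
  have "(\<Sum>(a, b)\<in>A_set n. f a b) = (\<Sum>(b, a)\<in>(SIGMA b:{1..n}. {b..n+1-b}). f a b)"
    by (rule sum.reindex_bij_witness[where i="\<lambda>(b, a). (a, b)" and j="\<lambda>(a, b). (b, a)"])
       (auto simp: A_set_def)
  also have "\<dots> = (\<Sum>b\<in>{1..n}. \<Sum>a\<in>{b..n+1-b}. f a b)"
    by (rule sum.Sigma[symmetric]) auto
  finally show ?thesis .
qed

lemma sum_abs_r_coef_le:
  assumes "2 \<le> n"
  shows "(\<Sum>(a, b)\<in>A_set n. \<bar>r_coef n a b\<bar>) \<le> 3 / real n"
proof -
  have "{1..n} = insert 1 {2..n}"
    using assms by auto
  then have "(\<Sum>(a, b)\<in>A_set n. \<bar>r_coef n a b\<bar>)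
               = (\<Sum>a\<in>{1..n}. \<bar>r_coef n a 1\<bar>) + (\<Sum>b\<in>{2..n}. \<Sum>a\<in>{b..n+1-b}. \<bar>r_coef n a b\<bar>)"
    unfolding sum_A_set_by_rows by simp
  also have "\<dots> \<le> 2 / real n + (\<Sum>b\<in>{2..n}. 1 / (real n * (real n - 1)))"
    using assms by (intro add_mono first_row_le sum_mono inner_row_le) auto
  also have "(\<Sum>b\<in>{2..n}. 1 / (real n * (real n - 1))) = 1 / real n"
    using assms by (simp add: of_nat_diff)
  finally show ?thesis
    by simp
qed

theorem mainTheorem18:
  shows "(\<lambda>n. ln (real n) * (\<Sum>(a, b)\<in>A_set n. \<bar>r_coef n a b\<bar>)) \<longlonglongrightarrow> 0"
proof (rule tendsto_sandwich[where f="\<lambda>_. 0" and h="\<lambda>n. 3 * (ln (real n) / real n)"])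
  show "\<forall>\<^sub>F n in sequentially. 0 \<le> ln (real n) * (\<Sum>(a, b)\<in>A_set n. \<bar>r_coef n a b\<bar>)"
    by (rule eventually_sequentiallyI[of 1]) (auto intro!: mult_nonneg_nonneg sum_nonneg)
  show "\<forall>\<^sub>F n in sequentially.
          ln (real n) * (\<Sum>(a, b)\<in>A_set n. \<bar>r_coef n a b\<bar>) \<le> 3 * (ln (real n) / real n)"
  proof (rule eventually_sequentiallyI[of 2])
    fix n :: nat
    assume "n \<ge> 2"
    then have "ln (real n) * (\<Sum>(a, b)\<in>A_set n. \<bar>r_coef n a b\<bar>) \<le> ln (real n) * (3 / real n)"
      by (intro mult_left_mono sum_abs_r_coef_le) auto
    then show "ln (real n) * (\<Sum>(a, b)\<in>A_set n. \<bar>r_coef n a b\<bar>) \<le> 3 * (ln (real n) / real n)"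
      by (simp add: mult.commute)
  qed
  show "(\<lambda>n. 3 * (ln (real n) / real n)) \<longlonglongrightarrow> 0"
    using tendsto_mult_right_zero[OF lim_ln_over_n, of 3] by simp
qed (rule tendsto_const)

end
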